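(* Let $U\subseteq\mathbb{R}$ be open, let $\widetilde{H}\subseteq U$ be Lebesgue measurable and let $\varepsilon>0$. Then there is an open set $H\subseteq U$ such that $|\widetilde{H}\setminus H|=0$ and, for every bounded connected component $I=(a,b)$ of $H$, the point $a$ is a right density point of $\widetilde{H}$, the point $b$ is a left density point of $\widetilde{H}$, and for every $r\in(0,b-a)$ $$\max\Big\{\frac{|(a,a+r)\setminus\widetilde{H}|}{r},\ \frac{|(b-r,b)\setminus\widetilde{H}|}{r}\Big\}<\varepsilon.$$
   Context: $|A|$ denotes Lebesgue measure. A point $x$ is a right (resp. left) density point of a set $A$ if for every sequence of intervals $I_n=[x,x+r_n]$ (resp. $I_n=[x-r_n,x]$) with $r_n\searrow0$ we have $|A\cap I_n|/|I_n|\to1$. *)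

theory Defs
  imports "HOL-Analysis.Analysis"
begin

definition right_density_point :: "real set \<Rightarrow> real \<Rightarrow> bool" where
  "right_density_point A x \<longleftrightarrow>
     (\<forall>r::nat \<Rightarrow> real. (\<forall>n. 0 < r n) \<and> decseq r \<and> r \<longlonglongrightarrow> 0 \<longrightarrow>
        (\<lambda>n. measure lebesgue (A \<inter> {x .. x + r n}) / r n) \<longlonglongrightarrow> 1)"

definition left_density_point :: "real set \<Rightarrow> real \<Rightarrow> bool" where
  "left_density_point A x \<longleftrightarrow>
     (\<forall>r::nat \<Rightarrow> real. (\<forall>n. 0 < r n) \<and> decseq r \<and> r \<longlonglongrightarrow> 0 \<longrightarrow>
        (\<lambda>n. measure lebesgue (A \<inter> {x - r n .. x}) / r n) \<longlonglongrightarrow> 1)"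

end

theory Submission
  imports Defs
begin

(* By the Lebesgue density theorem almost every point x of Ht is a density point, so
   |cball x r - Ht| < \<epsilon> r for all r below some scale 1/(n+1), and also ball x (1/(n+1)) \<subseteq> U;
   these are the points uniform_density_points U Ht \<epsilon> n. Apart from the countably many such
   points that are isolated on one side within this set, each of them lies in arbitrarily short
   intervals (c,d) with both endpoints in the same set and d - c < 1/(n+1). Vitali's covering
   theorem selects disjoint such intervals covering almost all of Ht. Their union H has exactly
   these intervals as components, and the endpoint estimates hold because r < b - a lies below
   the scale at which a and b are controlled. *)

lemma countable_imp_negligible: "countable (S :: 'a::euclidean_space set) \<Longrightarrow> negligible S"
  by (simp add: negligible_iff_null_sets countable_imp_null_set_lborel null_sets_completionI)

lemma measure_cball_real: "r \<ge> 0 \<Longrightarrow> measure lebesgue (cball (x::real) r) = 2 * r"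
  by (simp add: cball_eq_atLeastAtMost)

lemma measure_diff_le_cball_diff:
  fixes x :: "'a::euclidean_space"
  assumes "S \<subseteq> cball x r" "S \<in> sets lebesgue" "A \<in> sets lebesgue"
  shows "measure lebesgue (S - A) \<le> measure lebesgue (cball x r - A)"
  using assms by (intro measure_mono_fmeasurable fmeasurable_Diff) auto

lemma negligible_if_almost_covered:
  fixes E :: "'a::euclidean_space set"
  assumes "\<And>\<eta>. \<eta> > 0 \<Longrightarrow>
    \<exists>D. D \<in> lmeasurable \<and> measure lebesgue D \<le> \<eta> \<and> negligible (E - D)"
  shows "negligible E"
  unfolding negligible_outer_le
proof (intro allI impI)
  fix \<eta> :: real
  assume "\<eta> > 0"
  then obtain D where D: "D \<in> lmeasurable" "measure lebesgue D \<le> \<eta>" "negligible (E - D)"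
    using assms by blast
  have "D - (D \<union> E) \<union> (D \<union> E - D) = E - D"
    by blast
  then have "negligible (D - (D \<union> E) \<union> (D \<union> E - D))"
    using D(3) by simp
  then have "D \<union> E \<in> lmeasurable" "measure lebesgue (D \<union> E) = measure lebesgue D"
    using lmeasurable_negligible_symdiff[OF D(1)] measure_negligible_symdiff[OF D(1)] by blast+
  with D(2) show "\<exists>T. E \<subseteq> T \<and> T \<in> lmeasurable \<and> measure lebesgue T \<le> \<eta>"
    by (intro exI[of _ "D \<union> E"]) simp
qed

definition density_point :: "real set \<Rightarrow> real \<Rightarrow> bool" where
  "density_point A x \<longleftrightarrow> ((\<lambda>r. measure lebesgue (cball x r - A) / r) \<longlongrightarrow> 0) (at_right 0)"

lemma density_point_iff:
  "density_point A x \<longleftrightarrow> (\<forall>e>0. \<forall>\<^sub>F r in at_right 0. measure lebesgue (cball x r - A) < e * r)"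
proof -
  have "(\<forall>\<^sub>F r in at_right 0. dist (measure lebesgue (cball x r - A) / r) 0 < e) \<longleftrightarrow>
        (\<forall>\<^sub>F r in at_right 0. measure lebesgue (cball x r - A) < e * r)" for e :: real
    by (rule eventually_cong[OF eventually_at_right_less]) (simp add: divide_less_eq)
  then show ?thesis
    unfolding density_point_def tendsto_iff by simp
qed

lemma
  fixes C :: "(real \<times> real) set"
  assumes "countable C" "A \<in> sets lebesgue" "V - A \<in> lmeasurable" "e > 0"
    and disjoint: "pairwise (\<lambda>i j. disjnt (cball (fst i) (snd i)) (cball (fst j) (snd j))) C"
    and sparse: "\<And>i. i \<in> C \<Longrightarrow> 0 < snd i \<and> cball (fst i) (snd i) \<subseteq> V \<and>
                          e * snd i < measure lebesgue (cball (fst i) (snd i) - A)"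
  shows fmeasurable_UN_sparse_cballs: "(\<Union>i\<in>C. cball (fst i) (snd i)) \<in> lmeasurable"
    and measure_UN_sparse_cballs_le:
      "measure lebesgue (\<Union>i\<in>C. cball (fst i) (snd i)) \<le> 2 / e * measure lebesgue (V - A)"
proof -
  let ?B = "\<lambda>i. cball (fst i) (snd i)"
  have "measure lebesgue (\<Union>i\<in>F. ?B i) \<le> 2 / e * measure lebesgue (V - A)"
    if "F \<subseteq> C" "finite F" for F
  proof -
    have "measure lebesgue (\<Union>i\<in>F. ?B i) \<le> (\<Sum>i\<in>F. measure lebesgue (?B i))"
      using \<open>finite F\<close> by (intro measure_UNION_le) auto
    also have "\<dots> \<le> (\<Sum>i\<in>F. 2 / e * measure lebesgue (?B i - A))"
    proof (intro sum_mono)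
      fix i
      assume "i \<in> F"
      then show "measure lebesgue (?B i) \<le> 2 / e * measure lebesgue (?B i - A)"
        using sparse[of i] \<open>F \<subseteq> C\<close> \<open>e > 0\<close> by (subst measure_cball_real) (auto simp: field_simps)
    qed
    also have "\<dots> = 2 / e * measure lebesgue (\<Union>i\<in>F. ?B i - A)"
      using \<open>finite F\<close> \<open>A \<in> sets lebesgue\<close> pairwise_subset[OF disjoint \<open>F \<subseteq> C\<close>]
      by (subst measure_UNION') (auto simp: sum_distrib_left disjnt_def intro: fmeasurable_Diff elim!: pairwise_mono)
    also have "\<dots> \<le> 2 / e * measure lebesgue (V - A)"
      using sparse that \<open>A \<in> sets lebesgue\<close> \<open>V - A \<in> lmeasurable\<close> \<open>e > 0\<close>
      by (intro mult_left_mono measure_mono_fmeasurable) (auto intro!: sets.Diff sets.finite_UN)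
    finally show ?thesis .
  qed
  then show "(\<Union>i\<in>C. ?B i) \<in> lmeasurable"
    and "measure lebesgue (\<Union>i\<in>C. ?B i) \<le> 2 / e * measure lebesgue (V - A)"
    by (intro fmeasurable_UN_bound[OF \<open>countable C\<close>] measure_UN_bound[OF \<open>countable C\<close>]
        lmeasurable_cball; blast)+
qed

lemma negligible_frequently_sparse:
  fixes A :: "real set"
  assumes A: "A \<in> sets lebesgue" and "e > 0"
  shows "negligible {x\<in>A. \<exists>\<^sub>F r in at_right 0. e * r < measure lebesgue (cball x r - A)}"
    (is "negligible ?E")
proof (rule negligible_if_almost_covered)
  fix \<eta> :: real
  assume "\<eta> > 0"
  then obtain V where V: "open V" "A \<subseteq> V" "V - A \<in> lmeasurable"
      "emeasure lebesgue (V - A) < ennreal (e * \<eta> / 2)"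
    using sets_lebesgue_outer_open[OF A, of "e * \<eta> / 2"] \<open>e > 0\<close> by auto
  then have small: "2 / e * measure lebesgue (V - A) \<le> \<eta>"
    using \<open>e > 0\<close> \<open>\<eta> > 0\<close> by (simp add: emeasure_eq_measure2 ennreal_less_iff field_simps)
  (* Each ball in K misses A on more than an e/2 fraction of its measure 2 r, so a disjoint
     family of them inside V has total measure at most 2/e |V - A|. *)
  define K where "K = {(x, r). x \<in> ?E \<and> 0 < r \<and> cball x r \<subseteq> V \<and> e * r < measure lebesgue (cball x r - A)}"
  have in_K: "0 < snd i \<and> cball (fst i) (snd i) \<subseteq> V \<and> e * snd i < measure lebesgue (cball (fst i) (snd i) - A)"
    if "i \<in> K" for i
    using that by (auto simp: K_def)
  have fine: "\<exists>i. i \<in> K \<and> x \<in> cball (fst i) (snd i) \<and> snd i < d" if "x \<in> ?E" "0 < d" for x d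
  proof -
    obtain \<delta> where "\<delta> > 0" "cball x \<delta> \<subseteq> V"
      using \<open>x \<in> ?E\<close> V(1,2) open_contains_cball by blast
    have "\<forall>\<^sub>F r in at_right 0. 0 < r \<and> r < min \<delta> d"
      using \<open>\<delta> > 0\<close> \<open>d > 0\<close> by (intro eventually_at_rightI[of 0 "min \<delta> d"]) auto
    with \<open>x \<in> ?E\<close> have
      "\<exists>\<^sub>F r in at_right 0. e * r < measure lebesgue (cball x r - A) \<and> 0 < r \<and> r < min \<delta> d"
      by (auto intro: frequently_eventually_frequently)
    then obtain r where r: "e * r < measure lebesgue (cball x r - A)" "0 < r" "r < min \<delta> d"
      by (auto dest: frequently_ex)
    have "cball x r \<subseteq> V"
      using r(3) \<open>cball x \<delta> \<subseteq> V\<close> subset_cball[of r \<delta> x] by simp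
    with r \<open>x \<in> ?E\<close> show ?thesis
      by (intro exI[of _ "(x, r)"]) (auto simp: K_def)
  qed
  obtain C where C: "countable C" "C \<subseteq> K"
      "pairwise (\<lambda>i j. disjnt (cball (fst i) (snd i)) (cball (fst j) (snd j))) C"
      "negligible (?E - (\<Union>i\<in>C. cball (fst i) (snd i)))"
    using Vitali_covering_theorem_cballs[of K snd ?E fst] fine in_K by blast
  let ?D = "\<Union>i\<in>C. cball (fst i) (snd i)"
  have "?D \<in> lmeasurable"
    by (rule fmeasurable_UN_sparse_cballs[OF C(1) A V(3) \<open>e > 0\<close> C(3)]) (use in_K C(2) in blast)
  moreover have "measure lebesgue ?D \<le> 2 / e * measure lebesgue (V - A)"
    by (rule measure_UN_sparse_cballs_le[OF C(1) A V(3) \<open>e > 0\<close> C(3)]) (use in_K C(2) in blast)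
  ultimately show "\<exists>D. D \<in> lmeasurable \<and> measure lebesgue D \<le> \<eta> \<and> negligible (?E - D)"
    using small C(4) by (intro exI[of _ ?D]) auto
qed

theorem lebesgue_density_theorem:
  assumes "A \<in> sets lebesgue"
  shows "negligible {x\<in>A. \<not> density_point A x}"
proof -
  let ?F = "\<lambda>k::nat. {x\<in>A. \<exists>\<^sub>F r in at_right 0. 1 / Suc k * r < measure lebesgue (cball x r - A)}"
  have "{x\<in>A. \<not> density_point A x} \<subseteq> (\<Union>k. ?F k)"
  proof safe
    fix x
    assume "x \<in> A" "\<not> density_point A x"
    then obtain e where "e > 0"
      and freq: "\<exists>\<^sub>F r in at_right 0. e * r \<le> measure lebesgue (cball x r - A)"
      unfolding density_point_iff by (auto simp: not_eventually not_less)
    obtain k where k: "1 / Suc k < e"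
      using \<open>e > 0\<close> nat_approx_posE by blast
    have "\<exists>\<^sub>F r in at_right 0. 1 / Suc k * r < measure lebesgue (cball x r - A)"
      using frequently_eventually_frequently[OF freq eventually_at_right_less]
    proof (rule frequently_elim1)
      fix r :: real
      assume r: "e * r \<le> measure lebesgue (cball x r - A) \<and> 0 < r"
      then have "1 / Suc k * r < e * r"
        using k by (intro mult_strict_right_mono) auto
      with r show "1 / Suc k * r < measure lebesgue (cball x r - A)"
        by linarith
    qed
    with \<open>x \<in> A\<close> show "x \<in> (\<Union>k. ?F k)"
      by blast
  qed
  moreover have "negligible (\<Union>k. ?F k)"
    using assms by (intro negligible_Union_nat negligible_frequently_sparse) auto
  ultimately show ?thesis
    using negligible_subset by blast
qed

lemma density_point_tendsto_ratio:
  assumes "density_point A x" "A \<in> sets lebesgue"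
    and J: "\<And>t. t > 0 \<Longrightarrow> J t \<subseteq> cball x t \<and> J t \<in> lmeasurable \<and> measure lebesgue (J t) = t"
  shows "((\<lambda>t. measure lebesgue (A \<inter> J t) / t) \<longlongrightarrow> 1) (at_right 0)"
proof -
  have split: "measure lebesgue (A \<inter> J t) / t = 1 - measure lebesgue (J t - A) / t" if "t > 0" for t
  proof -
    have Jt: "J t \<in> lmeasurable" "measure lebesgue (J t) = t"
      using J[OF that] by auto
    have "measure lebesgue (J t - (A \<inter> J t)) = measure lebesgue (J t) - measure lebesgue (A \<inter> J t)"
      using Jt(1) assms(2) by (intro measurable_measure_Diff) auto
    moreover have "J t - (A \<inter> J t) = J t - A"
      by blast
    ultimately have "measure lebesgue (J t - A) = t - measure lebesgue (A \<inter> J t)"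
      using Jt by simp
    then show ?thesis
      using that by (simp add: field_simps)
  qed
  have "((\<lambda>t. measure lebesgue (J t - A) / t) \<longlongrightarrow> 0) (at_right 0)"
  proof (rule tendsto_sandwich[where f = "\<lambda>_. 0"])
    show "\<forall>\<^sub>F t in at_right 0. 0 \<le> measure lebesgue (J t - A) / t"
      using eventually_at_right_less by eventually_elim simp
    show "\<forall>\<^sub>F t in at_right 0. measure lebesgue (J t - A) / t \<le> measure lebesgue (cball x t - A) / t"
      using eventually_at_right_less
    proof eventually_elim
      fix t :: real
      assume "0 < t"
      then show "measure lebesgue (J t - A) / t \<le> measure lebesgue (cball x t - A) / t"
        using J[of t] assms(2) by (intro divide_right_mono measure_diff_le_cball_diff) auto
    qed
    show "((\<lambda>t. measure lebesgue (cball x t - A) / t) \<longlongrightarrow> 0) (at_right 0)"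
      using assms(1) unfolding density_point_def .
  qed simp
  then have "((\<lambda>t. 1 - measure lebesgue (J t - A) / t) \<longlongrightarrow> 1) (at_right 0)"
    using tendsto_diff[OF tendsto_const, of _ 0 _ 1] by simp
  moreover have "\<forall>\<^sub>F t in at_right 0. 1 - measure lebesgue (J t - A) / t = measure lebesgue (A \<inter> J t) / t"
    using eventually_at_right_less by eventually_elim (simp add: split)
  ultimately show ?thesis
    by (rule Lim_transform_eventually)
qed

lemma tendsto_at_right_zero_compose_sequence:
  fixes r :: "nat \<Rightarrow> real"
  assumes "(f \<longlongrightarrow> l) (at_right 0)" "\<And>n. 0 < r n" "r \<longlonglongrightarrow> 0"
  shows "(\<lambda>n. f (r n)) \<longlonglongrightarrow> l"
proof -
  have "filterlim r (at_right 0) sequentially"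
    using assms(2,3) by (intro tendsto_imp_filterlim_at_right) (auto intro: always_eventually)
  with assms(1) show ?thesis
    by (rule filterlim_compose)
qed

lemma density_point_imp_right_density_point:
  assumes "density_point A x" "A \<in> sets lebesgue"
  shows "right_density_point A x"
proof -
  have "((\<lambda>t. measure lebesgue (A \<inter> {x..x + t}) / t) \<longlongrightarrow> 1) (at_right 0)"
  proof (rule density_point_tendsto_ratio[OF assms])
    show "{x..x + t} \<subseteq> cball x t \<and> {x..x + t} \<in> lmeasurable \<and> measure lebesgue {x..x + t} = t"
      if "t > 0" for t
      using that by (simp add: cball_eq_atLeastAtMost)
  qed
  then show ?thesis
    unfolding right_density_point_def using tendsto_at_right_zero_compose_sequence by blast
qed

lemma density_point_imp_left_density_point:
  assumes "density_point A x" "A \<in> sets lebesgue"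
  shows "left_density_point A x"
proof -
  have "((\<lambda>t. measure lebesgue (A \<inter> {x - t..x}) / t) \<longlongrightarrow> 1) (at_right 0)"
  proof (rule density_point_tendsto_ratio[OF assms])
    show "{x - t..x} \<subseteq> cball x t \<and> {x - t..x} \<in> lmeasurable \<and> measure lebesgue {x - t..x} = t"
      if "t > 0" for t
      using that by (simp add: cball_eq_atLeastAtMost)
  qed
  then show ?thesis
    unfolding left_density_point_def using tendsto_at_right_zero_compose_sequence by blast
qed

lemma countable_right_isolated:
  fixes E :: "real set"
  shows "countable {x\<in>E. \<exists>h>0. E \<inter> {x<..<x + h} = {}}"
    (is "countable ?S")
proof -
  have "\<forall>x\<in>?S. \<exists>q. q \<in> \<rat> \<and> x < q \<and> (\<forall>c\<in>E. c \<le> x \<or> q < c)"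
  proof
    fix x
    assume "x \<in> ?S"
    then obtain h where "h > 0" and h: "E \<inter> {x<..<x + h} = {}"
      by blast
    then obtain q where "q \<in> \<rat>" "x < q" "q < x + h"
      using Rats_dense_in_real[of x "x + h"] by auto
    moreover have "\<forall>c\<in>E. c \<le> x \<or> q < c"
      using h \<open>q < x + h\<close> by (auto simp: disjoint_iff)
    ultimately show "\<exists>q. q \<in> \<rat> \<and> x < q \<and> (\<forall>c\<in>E. c \<le> x \<or> q < c)"
      by blast
  qed
  from bchoice[OF this] obtain q
    where q: "\<forall>x\<in>?S. q x \<in> \<rat> \<and> x < q x \<and> (\<forall>c\<in>E. c \<le> x \<or> q x < c)"
    ..
  have "strict_mono_on ?S q"
  proof (rule strict_mono_onI)
    fix x y
    assume "x \<in> ?S" "y \<in> ?S" "x < y"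
    have "y \<in> E"
      using \<open>y \<in> ?S\<close> by simp
    then have "q x < y"
      using bspec[OF q \<open>x \<in> ?S\<close>] \<open>x < y\<close> by auto
    also have "y < q y"
      using bspec[OF q \<open>y \<in> ?S\<close>] by simp
    finally show "q x < q y" .
  qed
  then have "inj_on q ?S"
    by (rule strict_mono_on_imp_inj_on)
  moreover have "q ` ?S \<subseteq> \<rat>"
    using q by auto
  then have "countable (q ` ?S)"
    using countable_rat countable_subset by blast
  ultimately show ?thesis
    by (rule countable_image_inj_on[rotated])
qed

lemma countable_left_isolated:
  fixes E :: "real set"
  shows "countable {x\<in>E. \<exists>h>0. E \<inter> {x - h<..<x} = {}}"
proof -
  let ?R = "{y\<in>uminus ` E. \<exists>h>0. uminus ` E \<inter> {y<..<y + h} = {}}"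
  have "{x\<in>E. \<exists>h>0. E \<inter> {x - h<..<x} = {}} \<subseteq> uminus ` ?R"
  proof
    fix x
    assume "x \<in> {x\<in>E. \<exists>h>0. E \<inter> {x - h<..<x} = {}}"
    then obtain h where "x \<in> E" "h > 0" and h: "E \<inter> {x - h<..<x} = {}"
      by blast
    have "uminus ` E \<inter> {- x<..<- x + h} = uminus ` (E \<inter> {x - h<..<x})"
      by (simp add: image_Int[OF inj_uminus])
    with h \<open>x \<in> E\<close> \<open>h > 0\<close> have "- x \<in> ?R"
      by auto
    then show "x \<in> uminus ` ?R"
      by (rule image_eqI[rotated]) simp
  qed
  moreover have "countable (uminus ` ?R)"
    using countable_right_isolated by blast
  ultimately show ?thesis
    by (rule countable_subset)
qed

lemma almost_cover_by_disjoint_intervals: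
  fixes G :: "nat \<Rightarrow> real set"
  obtains C :: "(real \<times> real) set"
  where "countable C"
    and "\<And>i. i \<in> C \<Longrightarrow>
      fst i < snd i \<and> (\<exists>n. fst i \<in> G n \<and> snd i \<in> G n \<and> snd i - fst i < 1 / Suc n)"
    and "pairwise (\<lambda>i j. disjnt {fst i<..<snd i} {fst j<..<snd j}) C"
    and "negligible ((\<Union>n. G n) - (\<Union>i\<in>C. {fst i<..<snd i}))"
proof -
  define L where "L n =
    {x\<in>G n. \<exists>h>0. G n \<inter> {x<..<x + h} = {}} \<union> {x\<in>G n. \<exists>h>0. G n \<inter> {x - h<..<x} = {}}" for n
  define S where "S = (\<Union>n. G n - L n)"
  have "(\<Union>n. G n) - S \<subseteq> (\<Union>n. L n)"
    by (auto simp: S_def)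
  moreover have "negligible (\<Union>n. L n)"
    unfolding L_def
    by (intro negligible_Union_nat negligible_Un countable_imp_negligible
        countable_right_isolated countable_left_isolated)
  ultimately have neg_S: "negligible ((\<Union>n. G n) - S)"
    by (rule negligible_subset[rotated])
  define K where "K = {i. fst i < snd i \<and> (\<exists>n. fst i \<in> G n \<and> snd i \<in> G n \<and> snd i - fst i < 1 / Suc n)}"
  define mid where "mid i = (fst i + snd i) / 2" for i :: "real \<times> real"
  define rad where "rad i = (snd i - fst i) / 2" for i :: "real \<times> real"
  have ball_eq: "ball (mid i) (rad i) = {fst i<..<snd i}" for i
    by (simp add: mid_def rad_def greaterThanLessThan_eq_ball)
  have fine: "\<exists>i. i \<in> K \<and> x \<in> ball (mid i) (rad i) \<and> rad i < \<delta>" if "x \<in> S" "\<delta> > 0" for x \<delta>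
  proof -
    obtain n where "x \<in> G n" "x \<notin> L n"
      using \<open>x \<in> S\<close> by (auto simp: S_def)
    define h where "h = min \<delta> (1 / Suc n) / 2"
    have "h > 0"
      using \<open>\<delta> > 0\<close> by (simp add: h_def)
    have "G n \<inter> {x - h<..<x} \<noteq> {}" "G n \<inter> {x<..<x + h} \<noteq> {}"
      using \<open>x \<in> G n\<close> \<open>x \<notin> L n\<close> \<open>h > 0\<close> unfolding L_def by blast+
    then obtain c d where "c \<in> G n" "x - h < c" "c < x" "d \<in> G n" "x < d" "d < x + h"
      by auto
    moreover have "2 * h \<le> 1 / Suc n" "2 * h \<le> \<delta>"
      by (simp_all add: h_def)
    ultimately have "(c, d) \<in> K" "x \<in> ball (mid (c, d)) (rad (c, d))" "rad (c, d) < \<delta>"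
      unfolding K_def ball_eq by (auto simp: rad_def)
    then show ?thesis
      by blast
  qed
  obtain C where C: "countable C" "C \<subseteq> K"
      "pairwise (\<lambda>i j. disjnt (ball (mid i) (rad i)) (ball (mid j) (rad j))) C"
      "negligible (S - (\<Union>i\<in>C. ball (mid i) (rad i)))"
    using Vitali_covering_theorem_balls[of S K mid rad] fine by blast
  have "(\<Union>n. G n) - (\<Union>i\<in>C. {fst i<..<snd i}) \<subseteq>
      ((\<Union>n. G n) - S) \<union> (S - (\<Union>i\<in>C. ball (mid i) (rad i)))"
    by (auto simp: ball_eq)
  then have "negligible ((\<Union>n. G n) - (\<Union>i\<in>C. {fst i<..<snd i}))"
    using neg_S C(4) by (meson negligible_Un negligible_subset)
  moreover have "pairwise (\<lambda>i j. disjnt {fst i<..<snd i} {fst j<..<snd j}) C"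
    using C(3) by (simp add: ball_eq)
  moreover have "fst i < snd i \<and> (\<exists>n. fst i \<in> G n \<and> snd i \<in> G n \<and> snd i - fst i < 1 / Suc n)"
    if "i \<in> C" for i
    using that C(2) by (auto simp: K_def)
  ultimately show thesis
    using that C(1) by blast
qed

lemma components_UN_disjoint_intervals:
  fixes C :: "(real \<times> real) set"
  assumes nonempty: "\<And>i. i \<in> C \<Longrightarrow> fst i < snd i"
    and disjoint: "pairwise (\<lambda>i j. disjnt {fst i<..<snd i} {fst j<..<snd j}) C"
    and I: "I \<in> components (\<Union>i\<in>C. {fst i<..<snd i})"
  obtains i where "i \<in> C" "I = {fst i<..<snd i}"
proof -
  let ?H = "\<Union>i\<in>C. {fst i<..<snd i}"
  have endpoints: "fst i \<notin> ?H \<and> snd i \<notin> ?H" if "i \<in> C" for i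
  proof (intro conjI notI)
    assume "fst i \<in> ?H"
    then obtain j where "j \<in> C" "fst j < fst i" "fst i < snd j"
      by auto
    moreover have "(fst i + min (snd i) (snd j)) / 2 \<in> {fst i<..<snd i} \<inter> {fst j<..<snd j}"
      using nonempty[OF \<open>i \<in> C\<close>] calculation by auto
    ultimately show False
      using disjoint \<open>i \<in> C\<close> unfolding pairwise_def disjnt_def by fastforce
  next
    assume "snd i \<in> ?H"
    then obtain j where "j \<in> C" "fst j < snd i" "snd i < snd j"
      by auto
    moreover have "(max (fst i) (fst j) + snd i) / 2 \<in> {fst i<..<snd i} \<inter> {fst j<..<snd j}"
      using nonempty[OF \<open>i \<in> C\<close>] calculation by auto
    ultimately show False
      using disjoint \<open>i \<in> C\<close> unfolding pairwise_def disjnt_def by fastforce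
  qed
  obtain x where "x \<in> I"
    using in_components_nonempty[OF I] by blast
  then obtain i where "i \<in> C" and x: "x \<in> {fst i<..<snd i}"
    using in_components_subset[OF I] by blast
  have "{fst i<..<snd i} \<subseteq> I"
    using \<open>i \<in> C\<close> x \<open>x \<in> I\<close> by (intro components_maximal[OF I]) auto
  moreover have "I \<subseteq> {fst i<..<snd i}"
  proof
    fix y
    assume "y \<in> I"
    show "y \<in> {fst i<..<snd i}"
    proof (rule ccontr)
      assume "y \<notin> {fst i<..<snd i}"
      then have "fst i \<in> I \<or> snd i \<in> I"
        using connectedD_interval[OF in_components_connected[OF I]] \<open>x \<in> I\<close> \<open>y \<in> I\<close> x
        by (metis greaterThanLessThan_iff less_imp_le not_le)
      then show False
        using endpoints[OF \<open>i \<in> C\<close>] in_components_subset[OF I] by blast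
    qed
  qed
  ultimately show thesis
    using that \<open>i \<in> C\<close> by blast
qed

definition uniform_density_points :: "real set \<Rightarrow> real set \<Rightarrow> real \<Rightarrow> nat \<Rightarrow> real set" where
  "uniform_density_points U A \<epsilon> n =
     {x. density_point A x \<and> ball x (1 / Suc n) \<subseteq> U \<and>
         (\<forall>r\<in>{0<..<1 / Suc n}. measure lebesgue (cball x r - A) < \<epsilon> * r)}"

lemma negligible_diff_uniform_density_points:
  assumes "open U" "A \<subseteq> U" "A \<in> sets lebesgue" "\<epsilon> > 0"
  shows "negligible (A - (\<Union>n. uniform_density_points U A \<epsilon> n))"
proof -
  have "x \<in> (\<Union>n. uniform_density_points U A \<epsilon> n)" if "x \<in> A" "density_point A x" for x
  proof -
    obtain \<rho> where "\<rho> > 0" "ball x \<rho> \<subseteq> U"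
      using \<open>open U\<close> \<open>A \<subseteq> U\<close> \<open>x \<in> A\<close> openE by blast
    obtain b where "b > 0"
      and b: "\<And>r. 0 < r \<Longrightarrow> r < b \<Longrightarrow> measure lebesgue (cball x r - A) < \<epsilon> * r"
      using \<open>density_point A x\<close> \<open>\<epsilon> > 0\<close>
      unfolding density_point_iff eventually_at_right_field by force
    obtain n where n: "1 / Suc n < min \<rho> b"
      using \<open>\<rho> > 0\<close> \<open>b > 0\<close> nat_approx_posE by (metis min_less_iff_conj)
    then have "ball x (1 / Suc n) \<subseteq> U"
      using \<open>ball x \<rho> \<subseteq> U\<close> by (meson dual_order.trans less_imp_le min.strict_boundedE subset_ball)
    with n b \<open>density_point A x\<close> have "x \<in> uniform_density_points U A \<epsilon> n"
      unfolding uniform_density_points_def by auto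
    then show ?thesis
      by blast
  qed
  then have "A - (\<Union>n. uniform_density_points U A \<epsilon> n) \<subseteq> {x\<in>A. \<not> density_point A x}"
    by blast
  with lebesgue_density_theorem[OF \<open>A \<in> sets lebesgue\<close>] show ?thesis
    by (rule negligible_subset)
qed

lemma measure_diff_lt_at_uniform_density_point:
  assumes "x \<in> uniform_density_points U A \<epsilon> n" "A \<in> sets lebesgue"
    and "S \<subseteq> cball x r" "S \<in> sets lebesgue" "0 < r" "r < 1 / Suc n"
  shows "measure lebesgue (S - A) / r < \<epsilon>"
proof -
  have "measure lebesgue (S - A) \<le> measure lebesgue (cball x r - A)"
    using assms by (intro measure_diff_le_cball_diff)
  also have "\<dots> < \<epsilon> * r"
    using assms(1,5,6) unfolding uniform_density_points_def by auto
  finally show ?thesis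
    using \<open>0 < r\<close> by (simp add: divide_less_eq)
qed

lemma greaterThanLessThan_subset_at_uniform_density_point:
  assumes "c \<in> uniform_density_points U A \<epsilon> n" "d - c < 1 / Suc n"
  shows "{c<..<d} \<subseteq> U"
  using assms unfolding uniform_density_points_def by (auto simp: dist_real_def)

lemma uniform_density_points_interval_estimates:
  assumes a: "a \<in> uniform_density_points U A \<epsilon> n" and b: "b \<in> uniform_density_points U A \<epsilon> n"
    and "b - a < 1 / Suc n" "A \<in> sets lebesgue"
  shows "right_density_point A a \<and> left_density_point A b \<and>
    (\<forall>r. 0 < r \<and> r < b - a \<longrightarrow>
       max (measure lebesgue ({a<..<a + r} - A) / r) (measure lebesgue ({b - r<..<b} - A) / r) < \<epsilon>)"
proof -
  have "measure lebesgue ({a<..<a + r} - A) / r < \<epsilon>" "measure lebesgue ({b - r<..<b} - A) / r < \<epsilon>"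
    if "0 < r" "r < b - a" for r
    using that assms(3,4)
    by (intro measure_diff_lt_at_uniform_density_point[OF a] measure_diff_lt_at_uniform_density_point[OF b];
        auto simp: cball_eq_atLeastAtMost)+
  with assms show ?thesis
    unfolding uniform_density_points_def
    by (auto intro: density_point_imp_right_density_point density_point_imp_left_density_point)
qed

theorem lemma4p1:
  fixes U Ht :: "real set" and \<epsilon> :: real
  assumes "open U" and "Ht \<subseteq> U" and "Ht \<in> sets lebesgue" and "\<epsilon> > 0"
  shows "\<exists>H. open H \<and> H \<subseteq> U \<and> emeasure lebesgue (Ht - H) = 0 \<and>
    (\<forall>I \<in> components H. bounded I \<longrightarrow>
       (\<forall>a b. I = {a<..<b} \<longrightarrow>
          right_density_point Ht a \<and> left_density_point Ht b \<and>
          (\<forall>r. 0 < r \<and> r < b - a \<longrightarrow>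
             max (measure lebesgue ({a<..<a + r} - Ht) / r)
                 (measure lebesgue ({b - r<..<b} - Ht) / r) < \<epsilon>)))"
proof -
  let ?G = "uniform_density_points U Ht \<epsilon>"
  obtain C where C: "countable C"
      "\<And>i. i \<in> C \<Longrightarrow>
        fst i < snd i \<and> (\<exists>n. fst i \<in> ?G n \<and> snd i \<in> ?G n \<and> snd i - fst i < 1 / Suc n)"
      "pairwise (\<lambda>i j. disjnt {fst i<..<snd i} {fst j<..<snd j}) C"
      "negligible ((\<Union>n. ?G n) - (\<Union>i\<in>C. {fst i<..<snd i}))"
    using almost_cover_by_disjoint_intervals[of ?G] by blast
  define H where "H = (\<Union>i\<in>C. {fst i<..<snd i})"
  have "open H"
    unfolding H_def by (intro open_UN) auto
  moreover have "H \<subseteq> U"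
    unfolding H_def using C(2) greaterThanLessThan_subset_at_uniform_density_point by blast
  moreover have "negligible (Ht - H)"
    using negligible_diff_uniform_density_points[OF assms] C(4) unfolding H_def
    by (rule negligible_subset[OF negligible_Un]) blast
  then have "emeasure lebesgue (Ht - H) = 0"
    unfolding negligible_iff_null_sets by (rule null_setsD1)
  moreover have "right_density_point Ht a \<and> left_density_point Ht b \<and>
      (\<forall>r. 0 < r \<and> r < b - a \<longrightarrow>
         max (measure lebesgue ({a<..<a + r} - Ht) / r) (measure lebesgue ({b - r<..<b} - Ht) / r) < \<epsilon>)"
    if I: "I \<in> components H" and Iab: "I = {a<..<b}" for I a b
  proof -
    obtain i where "i \<in> C" "I = {fst i<..<snd i}"
      using components_UN_disjoint_intervals[OF _ C(3) I[unfolded H_def]] C(2) by blast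
    with C(2)[of i] Iab have "a = fst i" "b = snd i"
      by (auto simp: greaterThanLessThan_eq_iff)
    with C(2)[OF \<open>i \<in> C\<close>] \<open>Ht \<in> sets lebesgue\<close> show ?thesis
      using uniform_density_points_interval_estimates by blast
  qed
  ultimately show ?thesis
    by blast
qed

end
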